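(* Let $0\le\beta<1$, let $C\in\mathbb{R}^{n\times n}$ be symmetric with $\|C\|=1$ and $\gamma\in\mathbb{R}$. Let $P^{(1)},\dots,P^{(K)}$ be real symmetric $n\times n$ matrices, each of one of the following forms: $\gamma\mathbb{1}-C$; $S-\frac{\operatorname{tr}S}{n}\mathbb{1}$ with $S$ diagonal, $S_{ii}=\operatorname{sgn}(\rho_{ii}-1/n)$ for some $\rho$; or $D/\|D\|$ with $D=\operatorname{diag}(\rho)-\mathbb{1}/n\neq 0$ for some $\rho$. Let $\Delta H^{(0)}=0$ and $\Delta H^{(k)}=P^{(k)}+\beta\Delta H^{(k-1)}$ for $k=1,\dots,K$ (the HU update matrices with momentum, with step lengths $\lambda_k=\frac{(1-\beta)^2}{2}\operatorname{tr}(\rho_{H^{(k-1)}}\Delta H^{(k)})$). Then $$\inf_{c\in\mathbb{R}}\|\Delta H^{(K)}-c\mathbb{1}\|\le\frac{1}{1-\beta}.$$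
   Context: $\|\cdot\|$ is the operator norm, $\operatorname{diag}(\rho)$ the diagonal matrix with the diagonal entries of $\rho$, $\operatorname{sgn}(0)=0$, and $\rho_H=e^{-H}/\operatorname{tr}e^{-H}$. In the HU routine with momentum, the update is $\Delta H^{(k)}=P^{(k)}+\frac{\beta}{\lambda_{k-1}}M^{(k-1)}$ with $M^{(k-1)}=\lambda_{k-1}\Delta H^{(k-1)}$, i.e. the recursion in the claim. *)

theory Defs
  imports "HOL-Analysis.Analysis"
begin

definition opnorm :: "real^'n^'n \<Rightarrow> real" where
  "opnorm A = onorm (\<lambda>x. A *v x)"

definition diag_part :: "real^'n^'n \<Rightarrow> real^'n^'n" where
  "diag_part \<rho> = (\<chi> i j. if i = j then \<rho> $ i $ i else 0)"

definition form_shift :: "real^'n^'n \<Rightarrow> real \<Rightarrow> real^'n^'n \<Rightarrow> bool" where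
  "form_shift C \<gamma> P \<longleftrightarrow> P = \<gamma> *\<^sub>R mat 1 - C"

definition form_sign :: "real^'n^'n \<Rightarrow> bool" where
  "form_sign P \<longleftrightarrow> (\<exists>\<rho> :: real^'n^'n.
     let S = (\<chi> i j. if i = j then sgn (\<rho> $ i $ i - 1 / real CARD('n)) else 0) :: real^'n^'n
     in P = S - (trace S / real CARD('n)) *\<^sub>R mat 1)"

definition form_diag :: "real^'n^'n \<Rightarrow> bool" where
  "form_diag P \<longleftrightarrow> (\<exists>\<rho> :: real^'n^'n.
     let D = diag_part \<rho> - (1 / real CARD('n)) *\<^sub>R mat 1
     in D \<noteq> 0 \<and> P = (1 / opnorm D) *\<^sub>R D)"

end

theory Submission
  imports Defs
begin

text \<open>Every admissible direction \<open>P\<close> lies within operator-norm distance 1 of a scalar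
  matrix: \<open>\<gamma>\<one> - C\<close> is at distance \<open>\<parallel>C\<parallel> = 1\<close> from \<open>\<gamma>\<one>\<close>, the sign form differs from a
  diagonal matrix with entries in \<open>{-1, 0, 1}\<close> by a scalar matrix, and \<open>D/\<parallel>D\<parallel>\<close> has norm 1.
  Since the scalar matrices form a linear subspace, the distance to it is subadditive and
  positively homogeneous, so along the momentum recursion it is bounded by
  \<open>\<Sum>j<K. \<beta>^j \<le> 1/(1 - \<beta>)\<close>.\<close>

lemma opnorm_nonneg: "0 \<le> opnorm (A::real^'n^'n)"
  unfolding opnorm_def by (rule onorm_pos_le) simp

lemma opnorm_triangle: "opnorm ((A::real^'n^'n) + B) \<le> opnorm A + opnorm B"
  unfolding opnorm_def matrix_vector_mult_add_rdistrib
  by (rule onorm_triangle) simp_all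

lemma opnorm_scaleR: "opnorm (r *\<^sub>R (A::real^'n^'n)) = \<bar>r\<bar> * opnorm A"
proof -
  have "(\<lambda>x. (r *\<^sub>R A) *v x) = (\<lambda>x. r *\<^sub>R (A *v x))"
    by (simp add: scaleR_matrix_vector_assoc)
  then show ?thesis unfolding opnorm_def by (simp add: onorm_scaleR)
qed

lemma opnorm_uminus: "opnorm (- (A::real^'n^'n)) = opnorm A"
  using opnorm_scaleR[of "-1" A] by simp

lemma opnorm_eq_0D: "opnorm (A::real^'n^'n) = 0 \<Longrightarrow> A = 0"
  unfolding opnorm_def by (subst (asm) onorm_eq_0) (auto simp: matrix_eq)

lemma diagonal_mult_vector:
  "((\<chi> i j. if i = j then s i else 0) :: real^'n^'n) *v x = (\<chi> i. s i * x $ i)"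
proof -
  have "(\<Sum>j\<in>UNIV. (if i = j then s i else 0) * x $ j)
      = (\<Sum>j\<in>UNIV. if i = j then s i * x $ i else 0)" for i
    by (rule sum.cong) auto
  then show ?thesis unfolding matrix_vector_mult_def vec_eq_iff by simp
qed

lemma opnorm_diagonal_le_1:
  assumes "\<And>i. \<bar>s i\<bar> \<le> 1"
  shows "opnorm ((\<chi> i j. if i = j then s i else 0) :: real^'n^'n) \<le> 1"
  unfolding opnorm_def
proof (rule onorm_le)
  fix x :: "real^'n"
  have "norm (\<chi> i. s i * x $ i) \<le> norm x"
    unfolding norm_le inner_vec_def
  proof (rule sum_mono)
    fix i
    have "(s i)\<^sup>2 * (x $ i)\<^sup>2 \<le> 1 * (x $ i)\<^sup>2"
      using assms[of i] by (intro mult_right_mono) (simp_all add: abs_square_le_1)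
    then show "(\<chi> i. s i * x $ i) $ i \<bullet> (\<chi> i. s i * x $ i) $ i \<le> x $ i \<bullet> x $ i"
      by (simp add: power2_eq_square algebra_simps)
  qed
  then show "norm ((\<chi> i j. if i = j then s i else 0) *v x) \<le> 1 * norm x"
    by (simp add: diagonal_mult_vector)
qed

lemma form_shift_near_scalar:
  assumes "opnorm C = 1" and "form_shift C \<gamma> P"
  shows "opnorm (P - \<gamma> *\<^sub>R mat 1) = 1"
  using assms by (simp add: form_shift_def opnorm_uminus)

lemma form_sign_near_scalar:
  assumes "form_sign (P::real^'n^'n)"
  shows "\<exists>c. opnorm (P - c *\<^sub>R mat 1) \<le> 1"
proof -
  obtain \<rho> :: "real^'n^'n" and S :: "real^'n^'n" where
    S: "S = (\<chi> i j. if i = j then sgn (\<rho> $ i $ i - 1 / real CARD('n)) else 0)" and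
    P: "P = S - (trace S / real CARD('n)) *\<^sub>R mat 1"
    using assms unfolding form_sign_def Let_def by blast
  have "opnorm S \<le> 1"
    unfolding S by (rule opnorm_diagonal_le_1) (simp add: abs_sgn_eq)
  moreover have "P - (- (trace S / real CARD('n))) *\<^sub>R mat 1 = S"
    unfolding P by simp
  ultimately show ?thesis by metis
qed

lemma form_diag_opnorm:
  assumes "form_diag (P::real^'n^'n)"
  shows "opnorm P = 1"
proof -
  obtain D :: "real^'n^'n" where "D \<noteq> 0" and P: "P = (1 / opnorm D) *\<^sub>R D"
    using assms unfolding form_diag_def Let_def by blast
  then have "opnorm D \<noteq> 0" using opnorm_eq_0D by blast
  then have "opnorm D > 0" using opnorm_nonneg[of D] by linarith
  then show ?thesis by (simp add: P opnorm_scaleR)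
qed

lemma admissible_direction_near_scalar:
  assumes "opnorm C = 1"
    and "form_shift C \<gamma> P \<or> form_sign P \<or> form_diag (P::real^'n^'n)"
  shows "\<exists>c. opnorm (P - c *\<^sub>R mat 1) \<le> 1"
  using assms(2)
proof (elim disjE)
  assume "form_shift C \<gamma> P"
  then show ?thesis using form_shift_near_scalar[OF assms(1)] by (metis order_refl)
next
  assume "form_sign P"
  then show ?thesis by (rule form_sign_near_scalar)
next
  assume "form_diag P"
  then have "opnorm (P - 0 *\<^sub>R mat 1) = 1" by (simp add: form_diag_opnorm)
  then show ?thesis by (metis order_refl)
qed

lemma momentum_near_scalar:
  fixes P dH :: "nat \<Rightarrow> real^'n^'n"
  assumes "0 \<le> \<beta>"
    and near: "\<And>k. k \<in> {1..K} \<Longrightarrow> \<exists>c. opnorm (P k - c *\<^sub>R mat 1) \<le> b"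
    and "dH 0 = 0"
    and step: "\<And>k. k \<in> {1..K} \<Longrightarrow> dH k = P k + \<beta> *\<^sub>R dH (k - 1)"
  shows "\<exists>c. opnorm (dH K - c *\<^sub>R mat 1) \<le> b * (\<Sum>j<K. \<beta>^j)"
proof -
  have "k \<le> K \<Longrightarrow> \<exists>c. opnorm (dH k - c *\<^sub>R mat 1) \<le> b * (\<Sum>j<k. \<beta>^j)" for k
  proof (induction k)
    case 0
    show ?case using \<open>dH 0 = 0\<close> by (intro exI[of _ 0]) (simp add: opnorm_def onorm_zero)
  next
    case (Suc k)
    then obtain c where c: "opnorm (dH k - c *\<^sub>R mat 1) \<le> b * (\<Sum>j<k. \<beta>^j)" by auto
    have k: "Suc k \<in> {1..K}" using Suc.prems by simp
    obtain c' where c': "opnorm (P (Suc k) - c' *\<^sub>R mat 1) \<le> b" using near[OF k] by blast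
    have "dH (Suc k) - (c' + \<beta> * c) *\<^sub>R mat 1
        = (P (Suc k) - c' *\<^sub>R mat 1) + \<beta> *\<^sub>R (dH k - c *\<^sub>R mat 1)"
      using step[OF k] by (simp add: algebra_simps)
    then have "opnorm (dH (Suc k) - (c' + \<beta> * c) *\<^sub>R mat 1)
        \<le> opnorm (P (Suc k) - c' *\<^sub>R mat 1) + \<beta> * opnorm (dH k - c *\<^sub>R mat 1)"
      using opnorm_triangle opnorm_scaleR \<open>0 \<le> \<beta>\<close> by (metis abs_of_nonneg)
    also have "\<dots> \<le> b + \<beta> * (b * (\<Sum>j<k. \<beta>^j))"
      using c c' \<open>0 \<le> \<beta>\<close> by (intro add_mono mult_left_mono)
    also have "\<dots> = b * (\<Sum>j<Suc k. \<beta>^j)"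
      unfolding sum.lessThan_Suc_shift by (simp add: sum_distrib_left algebra_simps)
    finally show ?case by blast
  qed
  then show ?thesis by blast
qed

lemma geometric_partial_sum_le:
  fixes \<beta> :: real
  assumes "0 \<le> \<beta>" and "\<beta> < 1"
  shows "(\<Sum>j<K. \<beta>^j) \<le> 1 / (1 - \<beta>)"
proof -
  have "summable (\<lambda>j. \<beta>^j)" using assms by (simp add: summable_geometric)
  then have "(\<Sum>j<K. \<beta>^j) \<le> (\<Sum>j. \<beta>^j)"
    using assms by (intro sum_le_suminf) auto
  also have "\<dots> = 1 / (1 - \<beta>)" using assms by (simp add: suminf_geometric)
  finally show ?thesis .
qed

theorem lemma3:
  fixes C :: "real^'n^'n" and \<gamma> \<beta> :: real and K :: nat
    and P dH :: "nat \<Rightarrow> real^'n^'n"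
  assumes "0 \<le> \<beta>" and "\<beta> < 1"
    and "transpose C = C" and "opnorm C = 1"
    and "\<And>k. k \<in> {1..K} \<Longrightarrow> transpose (P k) = P k"
    and "\<And>k. k \<in> {1..K} \<Longrightarrow> form_shift C \<gamma> (P k) \<or> form_sign (P k) \<or> form_diag (P k)"
    and "dH 0 = 0"
    and "\<And>k. k \<in> {1..K} \<Longrightarrow> dH k = P k + \<beta> *\<^sub>R dH (k - 1)"
  shows "(INF c::real. opnorm (dH K - c *\<^sub>R mat 1)) \<le> 1 / (1 - \<beta>)"
proof -
  obtain c where "opnorm (dH K - c *\<^sub>R mat 1) \<le> 1 * (\<Sum>j<K. \<beta>^j)"
    using momentum_near_scalar[where b = 1, OF assms(1) _ assms(7,8)]
      admissible_direction_near_scalar[OF assms(4) assms(6)] by blast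
  also have "\<dots> \<le> 1 / (1 - \<beta>)"
    using geometric_partial_sum_le[OF assms(1,2)] by simp
  finally show ?thesis
    by (intro cINF_lower2[where x = c]) (auto intro: bdd_belowI[where m = 0] opnorm_nonneg)
qed

end
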